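(* If $\mathcal A(K_n,K_c)\ne0$ and $-1\notin\mathcal A(K_n,K_c)^+$, then $n\le c$.
   Context: $K_c$ is the complete graph on $c$ vertices. With $|I|=n$, $|O|=c$ ($O=\{0,\dots,c-1\}$), let $\mathbb F(n,c)$ be the free product of $n$ copies of the cyclic group of order $c$ with generators $u_v$, $\mathbb C[\mathbb F(n,c)]$ its group $*$-algebra, $\omega=e^{2\pi i/c}$, $e_{v,a}=\frac1c\sum_{k=0}^{c-1}(\omega^{-a}u_v)^k$. $\mathcal I(K_n,K_c)$ is the two-sided $*$-ideal generated by $e_{v,a}e_{v,b}$ ($a\ne b$) and $e_{v,a}e_{w,a}$ ($v\ne w$), and $\mathcal A(K_n,K_c)=\mathbb C[\mathbb F(n,c)]/\mathcal I(K_n,K_c)$. Let $\mathcal P$ be the cone of finite sums of elements $f^*f$, and $\mathcal A(K_n,K_c)^+=\{p+\mathcal I(K_n,K_c):p\in\mathcal P\}$. *)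

theory Defs
  imports Complex_Main
begin

text \<open>Elements of F(n,c) are represented by reduced words: lists of letters (v,k),
  meaning u_v^k, with v < n (v in I = {0..<n}), 0 < k < c, and no two adjacent letters
  with the same v.\<close>

type_synonym word = "(nat \<times> nat) list"

definition reduced :: "nat \<Rightarrow> nat \<Rightarrow> word \<Rightarrow> bool" where
  "reduced n c w \<longleftrightarrow> (\<forall>(v,k)\<in>set w. v < n \<and> 0 < k \<and> k < c) \<and>
     (\<forall>i. Suc i < length w \<longrightarrow> fst (w ! i) \<noteq> fst (w ! Suc i))"

definition push :: "nat \<Rightarrow> nat \<times> nat \<Rightarrow> word \<Rightarrow> word" where
  "push c vk w = (let v = fst vk; k0 = snd vk mod c in
     if k0 = 0 then w else
     (case w of [] \<Rightarrow> [(v, k0)]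
      | (v', k') # rest \<Rightarrow>
          if v' = v then (let s = (k0 + k') mod c in if s = 0 then rest else (v, s) # rest)
          else (v, k0) # w))"

definition mulw :: "nat \<Rightarrow> word \<Rightarrow> word \<Rightarrow> word" where
  "mulw c x y = foldr (push c) x y"

definition invw :: "nat \<Rightarrow> word \<Rightarrow> word" where
  "invw c w = rev (map (\<lambda>(v,k). (v, c - k)) w)"

type_synonym elem = "word \<Rightarrow> complex"

definition GA :: "nat \<Rightarrow> nat \<Rightarrow> elem set" where
  "GA n c = {f. finite {w. f w \<noteq> 0} \<and> (\<forall>w. f w \<noteq> 0 \<longrightarrow> reduced n c w)}"

definition zero_el :: elem where "zero_el = (\<lambda>w. 0)"
definition one_el :: elem where "one_el = (\<lambda>w. if w = [] then 1 else 0)"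
definition add_el :: "elem \<Rightarrow> elem \<Rightarrow> elem" where "add_el f g = (\<lambda>w. f w + g w)"
definition neg_el :: "elem \<Rightarrow> elem" where "neg_el f = (\<lambda>w. - f w)"
definition smul_el :: "complex \<Rightarrow> elem \<Rightarrow> elem" where "smul_el a f = (\<lambda>w. a * f w)"

definition conv :: "nat \<Rightarrow> elem \<Rightarrow> elem \<Rightarrow> elem" where
  "conv c f g = (\<lambda>w. \<Sum>(x,y)\<in>{(x,y). f x \<noteq> 0 \<and> g y \<noteq> 0 \<and> mulw c x y = w}. f x * g y)"

definition star :: "nat \<Rightarrow> elem \<Rightarrow> elem" where
  "star c f = (\<lambda>w. cnj (f (invw c w)))"

definition upow :: "nat \<Rightarrow> nat \<Rightarrow> nat \<Rightarrow> elem" where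
  "upow c v k = (\<lambda>w. if w = push c (v, k) [] then 1 else 0)"

definition omega :: "nat \<Rightarrow> complex" where
  "omega c = exp (2 * of_real pi * \<i> / of_nat c)"

definition eproj :: "nat \<Rightarrow> nat \<Rightarrow> nat \<Rightarrow> elem" where
  "eproj c v a = (\<lambda>w. (1 / of_nat c) * (\<Sum>k<c. (inverse (omega c)) ^ (a * k) * upow c v k w))"

definition gens :: "nat \<Rightarrow> nat \<Rightarrow> elem set" where
  "gens n c =
     {conv c (eproj c v a) (eproj c v b) | v a b. v < n \<and> a < c \<and> b < c \<and> a \<noteq> b} \<union>
     {conv c (eproj c v a) (eproj c w a) | v w a. v < n \<and> w < n \<and> v \<noteq> w \<and> a < c}"

definition is_star_ideal :: "nat \<Rightarrow> nat \<Rightarrow> elem set \<Rightarrow> bool" where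
  "is_star_ideal n c J \<longleftrightarrow> J \<subseteq> GA n c \<and> zero_el \<in> J \<and>
     (\<forall>x\<in>J. \<forall>y\<in>J. add_el x y \<in> J) \<and>
     (\<forall>x\<in>J. \<forall>a. smul_el a x \<in> J) \<and>
     (\<forall>x\<in>J. \<forall>y\<in>GA n c. conv c x y \<in> J \<and> conv c y x \<in> J) \<and>
     (\<forall>x\<in>J. star c x \<in> J)"

definition Ideal :: "nat \<Rightarrow> nat \<Rightarrow> elem set" where
  "Ideal n c = \<Inter>{J. is_star_ideal n c J \<and> gens n c \<subseteq> J}"

text \<open>Class of x in the quotient A(K_n,K_c) = C[F(n,c)] / I(K_n,K_c).\<close>
definition qclass :: "nat \<Rightarrow> nat \<Rightarrow> elem \<Rightarrow> elem set" where
  "qclass n c x = {y \<in> GA n c. add_el y (neg_el x) \<in> Ideal n c}"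

inductive_set Pcone :: "nat \<Rightarrow> nat \<Rightarrow> elem set" for n c where
  Pzero: "zero_el \<in> Pcone n c"
| Padd: "p \<in> Pcone n c \<Longrightarrow> f \<in> GA n c \<Longrightarrow> add_el p (conv c (star c f) f) \<in> Pcone n c"

definition Aplus :: "nat \<Rightarrow> nat \<Rightarrow> elem set set" where
  "Aplus n c = qclass n c ` Pcone n c"

definition A_nonzero :: "nat \<Rightarrow> nat \<Rightarrow> bool" where
  "A_nonzero n c \<longleftrightarrow> (\<exists>x\<in>GA n c. qclass n c x \<noteq> qclass n c zero_el)"

end

theory Submission
  imports Defs "HOL-Analysis.Complex_Transcendental"
begin

text \<open>Suppose n > c and put r = 1 / sqrt (n - c). For every colour a the element
  F_a = r (1 - \<Sum>_v e_{v,a}) is self-adjoint, and since the e_{v,a} are idempotents,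
  F_a^* F_a = r^2 (1 - \<Sum>_v e_{v,a} + \<Sum>_{v \<noteq> u} e_{v,a} e_{u,a}), whose last sum lies in the
  ideal. Summing over a and using \<Sum>_a e_{v,a} = 1 gives \<Sum>_a F_a^* F_a = r^2 (c - n) = -1
  modulo the ideal, so -1 \<in> A(K_n,K_c)^+.\<close>

section \<open>Roots of unity\<close>

lemma omega_power_order: "1 \<le> c \<Longrightarrow> omega c ^ c = 1"
proof -
  assume "1 \<le> c"
  have "omega c ^ c = exp (of_nat c * (2 * of_real pi * \<i> / of_nat c))"
    unfolding omega_def by (rule exp_of_nat_mult[symmetric])
  also have "of_nat c * (2 * of_real pi * \<i> / of_nat c) = 2 * of_real pi * \<i>"
    using \<open>1 \<le> c\<close> by (simp add: field_simps)
  finally show ?thesis by simp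
qed

lemma omega_power_neq_1:
  assumes k: "0 < k" "k < c"
  shows "omega c ^ k \<noteq> 1"
proof
  assume "omega c ^ k = 1"
  moreover have "omega c ^ k = exp (of_nat k * (2 * of_real pi * \<i> / of_nat c))"
    unfolding omega_def by (rule exp_of_nat_mult[symmetric])
  ultimately obtain m :: int where "real k * (2 * pi) / real c = 2 * of_int m * pi"
    by (auto simp: exp_eq_1)
  hence "real k = real c * of_int m" using k pi_gt_zero by (simp add: field_simps)
  hence "int k = int c * m" by (metis of_int_eq_iff of_int_mult of_int_of_nat_eq)
  moreover from this k have "0 < int c * m" by simp
  hence "0 < m" by (auto simp: zero_less_mult_iff)
  hence "int c * 1 \<le> int c * m" by (intro mult_left_mono) auto
  ultimately show False using k by linarith
qed

lemma cnj_omega: "cnj (omega c) = inverse (omega c)"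
  unfolding omega_def by (simp add: exp_cnj exp_minus[symmetric])

lemma inverse_omega_power_order: "1 \<le> c \<Longrightarrow> inverse (omega c) ^ c = 1"
  by (simp add: power_inverse omega_power_order)

lemma inverse_omega_power_periodic:
  "1 \<le> c \<Longrightarrow> inverse (omega c) ^ (a * (m + c)) = inverse (omega c) ^ (a * m)"
  by (simp add: distrib_left power_add mult.commute[of a c] power_mult inverse_omega_power_order)

lemma omega_power_eq_inverse_power:
  assumes c: "1 \<le> c" and k: "k \<le> c"
  shows "omega c ^ (a * k) = inverse (omega c) ^ (a * (c - k))"
proof -
  have "inverse (omega c) ^ (a * (c - k)) * inverse (omega c) ^ (a * k) = inverse (omega c) ^ (c * a)"
    using k by (simp add: power_add[symmetric] algebra_simps diff_mult_distrib2)
  also have "\<dots> = 1" by (simp add: power_mult inverse_omega_power_order[OF c])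
  finally show ?thesis
    by (simp add: field_simps power_inverse omega_def flip: power_mult_distrib)
qed

lemma sum_inverse_omega_powers:
  assumes c: "1 \<le> c" and k: "k < c"
  shows "(\<Sum>a<c. (inverse (omega c) ^ k) ^ a) = (if k = 0 then of_nat c else 0)"
proof (cases "k = 0")
  case False
  have "inverse (omega c) ^ k \<noteq> 1"
    using omega_power_neq_1[of k c] False k by (simp add: power_inverse)
  moreover have "(inverse (omega c) ^ k) ^ c = 1"
    by (metis power_mult mult.commute power_one inverse_omega_power_order[OF c])
  ultimately show ?thesis using False by (simp add: sum_gp_strict)
qed simp

lemma sum_shift_periodic:
  fixes g :: "nat \<Rightarrow> 'a::cancel_comm_monoid_add"
  assumes "\<And>m. g (m + c) = g m"
  shows "(\<Sum>k<c. g (j + k)) = (\<Sum>k<c. g k)"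
proof (induction j)
  case (Suc j)
  have "(\<Sum>k<Suc c. g (j + k)) = g (j + 0) + (\<Sum>k<c. g (j + Suc k))"
    by (rule sum.lessThan_Suc_shift)
  moreover have "(\<Sum>k<Suc c. g (j + k)) = (\<Sum>k<c. g (j + k)) + g j"
    using assms by simp
  ultimately have "(\<Sum>k<c. g (j + Suc k)) = (\<Sum>k<c. g (j + k))" by (simp add: add.commute)
  thus ?case using Suc by simp
qed simp

lemma sum_reflect_periodic:
  fixes g :: "nat \<Rightarrow> 'a::cancel_comm_monoid_add"
  assumes "\<And>m. g (m + c) = g m"
  shows "(\<Sum>k<c. g (c - k)) = (\<Sum>k<c. g k)"
proof -
  have "(\<Sum>k<c. g (c - k)) = (\<Sum>k<c. (\<lambda>i. g (Suc i)) (c - Suc k))"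
    by (rule sum.cong) (auto simp: Suc_diff_Suc)
  also have "\<dots> = (\<Sum>k<c. g (1 + k))" by (subst sum.nat_diff_reindex) simp
  finally show ?thesis using sum_shift_periodic[of g c 1, OF assms] by simp
qed

section \<open>Convolution of finitely supported functions\<close>

definition supp :: "elem \<Rightarrow> word set" where "supp f = {w. f w \<noteq> 0}"

definition delta :: "word \<Rightarrow> elem" where "delta x = (\<lambda>w. if w = x then 1 else 0)"

lemma one_el_eq_delta: "one_el = delta []"
  by (simp add: one_el_def delta_def)

lemma supp_delta: "supp (delta x) \<subseteq> {x}"
  by (simp add: supp_def delta_def)

lemma supp_scale: "supp (\<lambda>w. a * f w) \<subseteq> supp f"
  by (auto simp: supp_def)

lemma supp_diff: "supp (\<lambda>w. f w - g w) \<subseteq> supp f \<union> supp g"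
  by (auto simp: supp_def)

lemma supp_sum: "supp (\<lambda>w. \<Sum>i\<in>I. f i w) \<subseteq> (\<Union>i\<in>I. supp (f i))"
  unfolding supp_def by (auto elim: sum.not_neutral_contains_not_neutral)

lemma in_GA_if_supp_subset:
  "finite A \<Longrightarrow> supp f \<subseteq> A \<Longrightarrow> (\<And>w. w \<in> A \<Longrightarrow> reduced n c w) \<Longrightarrow> f \<in> GA n c"
  unfolding GA_def supp_def by (auto intro: finite_subset)

lemma conv_eq_sum_over_supersets:
  assumes "finite A" "finite B" "supp f \<subseteq> A" "supp g \<subseteq> B"
  shows "conv c f g w = (\<Sum>x\<in>A. \<Sum>y\<in>B. if mulw c x y = w then f x * g y else 0)"
proof -
  let ?S = "{(x,y). f x \<noteq> 0 \<and> g y \<noteq> 0 \<and> mulw c x y = w}"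
  let ?h = "\<lambda>(x,y). if mulw c x y = w then f x * g y else 0"
  have "?S \<subseteq> A \<times> B" using assms(3,4) unfolding supp_def by auto
  have "conv c f g w = (\<Sum>p\<in>?S. ?h p)"
    unfolding conv_def by (rule sum.cong) auto
  also have "\<dots> = (\<Sum>p\<in>A \<times> B. ?h p)"
    by (rule sum.mono_neutral_left) (use \<open>?S \<subseteq> A \<times> B\<close> assms(1,2) in \<open>auto split: if_splits\<close>)
  finally show ?thesis by (simp add: sum.cartesian_product)
qed

lemma conv_sum_sum:
  assumes "finite I" "finite J" "\<And>i. i \<in> I \<Longrightarrow> finite (supp (f i))"
    "\<And>j. j \<in> J \<Longrightarrow> finite (supp (g j))"
  shows "conv c (\<lambda>w. \<Sum>i\<in>I. f i w) (\<lambda>w. \<Sum>j\<in>J. g j w) w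
        = (\<Sum>i\<in>I. \<Sum>j\<in>J. conv c (f i) (g j) w)"
proof -
  define A where "A = (\<Union>i\<in>I. supp (f i))"
  define B where "B = (\<Union>j\<in>J. supp (g j))"
  have fin: "finite A" "finite B" using assms unfolding A_def B_def by auto
  have sub: "supp (\<lambda>w. \<Sum>i\<in>I. f i w) \<subseteq> A" "supp (\<lambda>w. \<Sum>j\<in>J. g j w) \<subseteq> B"
    unfolding A_def B_def by (rule supp_sum)+
  let ?m = "\<lambda>x y. of_bool (mulw c x y = w) :: complex"
  have "conv c (\<lambda>w. \<Sum>i\<in>I. f i w) (\<lambda>w. \<Sum>j\<in>J. g j w) w =
      (\<Sum>x\<in>A. \<Sum>y\<in>B. \<Sum>i\<in>I. \<Sum>j\<in>J. ?m x y * (f i x * g j y))"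
    unfolding conv_eq_sum_over_supersets[OF fin sub] by (intro sum.cong refl) (simp add: sum_product)
  also have "\<dots> = (\<Sum>x\<in>A. \<Sum>i\<in>I. \<Sum>y\<in>B. \<Sum>j\<in>J. ?m x y * (f i x * g j y))"
    by (rule sum.cong[OF refl], rule sum.swap)
  also have "\<dots> = (\<Sum>i\<in>I. \<Sum>x\<in>A. \<Sum>j\<in>J. \<Sum>y\<in>B. ?m x y * (f i x * g j y))"
    by (subst sum.swap) (rule sum.cong[OF refl], rule sum.cong[OF refl], rule sum.swap)
  also have "\<dots> = (\<Sum>i\<in>I. \<Sum>j\<in>J. \<Sum>x\<in>A. \<Sum>y\<in>B. ?m x y * (f i x * g j y))"
    by (rule sum.cong[OF refl], rule sum.swap)
  also have "\<dots> = (\<Sum>i\<in>I. \<Sum>j\<in>J. conv c (f i) (g j) w)"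
    by (intro sum.cong refl, subst conv_eq_sum_over_supersets[OF fin])
       (auto simp: A_def B_def intro!: sum.cong)
  finally show ?thesis .
qed

lemma conv_scale:
  assumes "finite (supp f)" "finite (supp g)"
  shows "conv c (\<lambda>w. a * f w) (\<lambda>w. b * g w) w = a * b * conv c f g w"
  by (simp add: conv_eq_sum_over_supersets[OF assms order_refl order_refl]
      conv_eq_sum_over_supersets[OF assms supp_scale supp_scale] sum_distrib_left
      if_distrib mult_ac cong: if_cong)

lemma conv_delta: "conv c (delta x) (delta y) = delta (mulw c x y)"
  by (rule ext, subst conv_eq_sum_over_supersets[OF _ _ supp_delta supp_delta])
     (auto simp: delta_def)

lemma finite_supp_one: "finite (supp one_el)"
  unfolding one_el_eq_delta by (rule finite_subset[OF supp_delta]) simp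

lemma conv_one_left: "finite (supp f) \<Longrightarrow> conv c one_el f w = f w"
  unfolding one_el_eq_delta
  by (subst conv_eq_sum_over_supersets[OF _ _ supp_delta order_refl])
     (auto simp: delta_def mulw_def supp_def)

lemma conv_one_right:
  assumes "finite (supp f)" "\<And>x. x \<in> supp f \<Longrightarrow> mulw c x [] = x"
  shows "conv c f one_el w = f w"
  unfolding one_el_eq_delta
  by (subst conv_eq_sum_over_supersets[OF _ _ order_refl supp_delta])
     (use assms in \<open>auto simp: delta_def supp_def\<close>)

definition gpow :: "nat \<Rightarrow> nat \<Rightarrow> nat \<Rightarrow> word" where "gpow c v k = push c (v, k) []"

lemma gpow_eq: "gpow c v k = (if k mod c = 0 then [] else [(v, k mod c)])"
  by (simp add: gpow_def push_def Let_def)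

lemma upow_eq_delta_gpow: "upow c v k = delta (gpow c v k)"
  by (simp add: upow_def delta_def gpow_def fun_eq_iff)

lemma gpow_add_period: "gpow c v (k + c) = gpow c v k"
  by (simp add: gpow_eq)

lemma reduced_gpow: "0 < c \<Longrightarrow> v < n \<Longrightarrow> reduced n c (gpow c v k)"
  by (auto simp: gpow_eq reduced_def)

lemma mulw_gpow: "mulw c (gpow c v j) y = push c (v, j) y"
  by (simp add: gpow_eq mulw_def push_def Let_def)

lemma mulw_gpow_gpow: "mulw c (gpow c v j) (gpow c v k) = gpow c v (j + k)"
proof -
  consider "j mod c = 0" | "k mod c = 0" | "j mod c \<noteq> 0" "k mod c \<noteq> 0" by blast
  thus ?thesis
  proof cases
    case 1
    hence "(j + k) mod c = k mod c" by (metis mod_add_left_eq add_0)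
    with 1 show ?thesis by (simp add: mulw_gpow gpow_eq push_def Let_def mulw_def)
  next
    case 2
    hence "(j + k) mod c = j mod c" by (metis mod_add_right_eq add_0_right)
    with 2 show ?thesis by (simp add: mulw_gpow gpow_eq push_def Let_def mulw_def)
  next
    case 3
    have "(j mod c + k mod c) mod c = (j + k) mod c" by (rule mod_add_eq)
    with 3 show ?thesis by (simp add: mulw_gpow gpow_eq push_def Let_def mulw_def)
  qed
qed

lemma mulw_gpow_Nil: "mulw c (gpow c v k) [] = gpow c v k"
  using mulw_gpow[of c v k "[]"] by (simp add: gpow_def)

lemma invw_eq_gpow_iff:
  assumes "k < c"
  shows "invw c w = gpow c v k \<longleftrightarrow> w = gpow c v (c - k)"
proof (cases "k = 0")
  case True
  thus ?thesis by (simp add: gpow_eq invw_def)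
next
  case False
  have "invw c w = [(v, k)] \<longleftrightarrow> w = [(v, c - k)]"
    using False assms by (cases w rule: rev_cases) (auto simp: invw_def)
  thus ?thesis using False assms by (simp add: gpow_eq)
qed

section \<open>The projections e_{v,a}\<close>

lemma eproj_eq_sum:
  "eproj c v a = (\<lambda>w. \<Sum>k<c. (1 / of_nat c * inverse (omega c) ^ (a * k)) * delta (gpow c v k) w)"
  by (simp add: eproj_def upow_eq_delta_gpow sum_distrib_left mult.assoc power_mult fun_eq_iff)

lemma supp_eproj: "supp (eproj c v a) \<subseteq> gpow c v ` {..<c}"
proof
  fix w assume "w \<in> supp (eproj c v a)"
  then obtain k where "k < c" "delta (gpow c v k) w \<noteq> 0"
    unfolding supp_def eproj_eq_sum by (auto elim: sum.not_neutral_contains_not_neutral)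
  thus "w \<in> gpow c v ` {..<c}" by (auto simp: delta_def split: if_splits)
qed

lemma finite_supp_eproj: "finite (supp (eproj c v a))"
  using supp_eproj by (rule finite_subset) simp

lemma conv_eproj_one: "conv c (eproj c v a) one_el w = eproj c v a w"
  by (intro conv_one_right finite_supp_eproj) (use supp_eproj[of c v a] in \<open>auto simp: mulw_gpow_Nil\<close>)

lemma eproj_idempotent:
  assumes c: "1 \<le> c"
  shows "conv c (eproj c v a) (eproj c v a) = eproj c v a"
proof
  fix w
  define t where "t k = (\<lambda>w. (1 / of_nat c * inverse (omega c) ^ (a * k)) * delta (gpow c v k) w)" for k
  define \<phi> where "\<phi> m = inverse (omega c) ^ (a * m) * delta (gpow c v m) w" for m
  have per: "\<phi> (m + c) = \<phi> m" for m
    unfolding \<phi>_def by (simp only: inverse_omega_power_periodic[OF c] gpow_add_period)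
  have fin: "finite (supp (t k))" for k
    unfolding t_def by (rule finite_subset[OF supp_scale]) (simp add: finite_subset[OF supp_delta])
  have "eproj c v a = (\<lambda>w. \<Sum>k<c. t k w)" unfolding eproj_eq_sum t_def ..
  hence "conv c (eproj c v a) (eproj c v a) w = (\<Sum>j<c. \<Sum>k<c. conv c (t j) (t k) w)"
    by (simp add: conv_sum_sum fin)
  also have "\<dots> = (\<Sum>j<c. \<Sum>k<c. (1 / of_nat c)^2 * \<phi> (j + k))"
    unfolding t_def
    by (intro sum.cong refl, subst conv_scale)
       (auto simp: finite_subset[OF supp_delta] conv_delta mulw_gpow_gpow \<phi>_def
        power2_eq_square power_add algebra_simps)
  also have "\<dots> = (\<Sum>j<c. (1 / of_nat c)^2 * (\<Sum>k<c. \<phi> k))"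
    by (simp add: sum_distrib_left[symmetric] sum_shift_periodic[where g=\<phi>, OF per])
  also have "\<dots> = 1 / of_nat c * (\<Sum>k<c. \<phi> k)"
    using c by (simp add: power2_eq_square)
  also have "\<dots> = eproj c v a w"
    unfolding eproj_eq_sum \<phi>_def by (simp add: sum_distrib_left mult.assoc)
  finally show "conv c (eproj c v a) (eproj c v a) w = eproj c v a w" .
qed

lemma star_eproj:
  assumes c: "1 \<le> c"
  shows "star c (eproj c v a) = eproj c v a"
proof
  fix w
  define \<phi> where "\<phi> m = inverse (omega c) ^ (a * m) * delta (gpow c v m) w" for m
  have per: "\<phi> (m + c) = \<phi> m" for m
    unfolding \<phi>_def by (simp only: inverse_omega_power_periodic[OF c] gpow_add_period)
  have "star c (eproj c v a) w = 1 / of_nat c * (\<Sum>k<c. \<phi> (c - k))"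
    unfolding star_def eproj_eq_sum
    by (auto simp: \<phi>_def delta_def invw_eq_gpow_iff cnj_omega omega_power_eq_inverse_power[OF c]
        sum_distrib_left intro!: sum.cong)
  also have "\<dots> = 1 / of_nat c * (\<Sum>k<c. \<phi> k)"
    by (simp only: sum_reflect_periodic[where g=\<phi>, OF per])
  also have "\<dots> = eproj c v a w"
    unfolding eproj_eq_sum \<phi>_def by (simp add: sum_distrib_left mult.assoc)
  finally show "star c (eproj c v a) w = eproj c v a w" .
qed

lemma sum_eproj:
  assumes c: "1 \<le> c"
  shows "(\<Sum>a<c. eproj c v a w) = one_el w"
proof -
  let ?z = "inverse (omega c)"
  have "(\<Sum>a<c. eproj c v a w) =
      (\<Sum>k<c. 1 / of_nat c * delta (gpow c v k) w * (\<Sum>a<c. (?z ^ k) ^ a))"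
    unfolding eproj_eq_sum
    by (subst sum.swap) (simp add: sum_distrib_left power_mult[symmetric] mult_ac)
  also have "\<dots> = (\<Sum>k<c. if k = 0 then delta (gpow c v 0) w else 0)"
    using c by (intro sum.cong refl) (simp add: sum_inverse_omega_powers)
  also have "\<dots> = one_el w"
    using c by (simp add: delta_def one_el_def gpow_eq)
  finally show ?thesis .
qed

lemma Ideal_add: "x \<in> Ideal n c \<Longrightarrow> y \<in> Ideal n c \<Longrightarrow> add_el x y \<in> Ideal n c"
  unfolding Ideal_def is_star_ideal_def by blast

lemma Ideal_smul: "x \<in> Ideal n c \<Longrightarrow> smul_el a x \<in> Ideal n c"
  unfolding Ideal_def is_star_ideal_def by blast

lemma gens_subset_Ideal: "gens n c \<subseteq> Ideal n c"
  unfolding Ideal_def by blast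

lemma Ideal_sum:
  "finite S \<Longrightarrow> (\<And>s. s \<in> S \<Longrightarrow> f s \<in> Ideal n c) \<Longrightarrow> (\<lambda>w. \<Sum>s\<in>S. f s w) \<in> Ideal n c"
proof (induction S rule: finite_induct)
  case empty
  show ?case using Ideal_def is_star_ideal_def zero_el_def by auto
next
  case (insert x F)
  hence "add_el (f x) (\<lambda>w. \<Sum>s\<in>F. f s w) \<in> Ideal n c" by (simp add: Ideal_add)
  thus ?case using insert by (simp add: add_el_def)
qed

lemma qclass_eq_if_diff_in_Ideal:
  assumes "add_el y (neg_el x) \<in> Ideal n c"
  shows "qclass n c x = qclass n c y"
proof -
  have "add_el z (neg_el x) \<in> Ideal n c \<longleftrightarrow> add_el z (neg_el y) \<in> Ideal n c" for z
  proof
    assume "add_el z (neg_el x) \<in> Ideal n c"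
    moreover have "add_el z (neg_el y) = add_el (add_el z (neg_el x)) (smul_el (-1) (add_el y (neg_el x)))"
      by (simp add: add_el_def neg_el_def smul_el_def fun_eq_iff)
    ultimately show "add_el z (neg_el y) \<in> Ideal n c" using assms by (simp add: Ideal_add Ideal_smul)
  next
    assume "add_el z (neg_el y) \<in> Ideal n c"
    moreover have "add_el z (neg_el x) = add_el (add_el z (neg_el y)) (add_el y (neg_el x))"
      by (simp add: add_el_def neg_el_def fun_eq_iff)
    ultimately show "add_el z (neg_el x) \<in> Ideal n c" using assms by (simp add: Ideal_add)
  qed
  thus ?thesis unfolding qclass_def by blast
qed

lemma Pcone_sum:
  fixes m :: nat
  shows "(\<And>a. a < m \<Longrightarrow> f a \<in> GA n c) \<Longrightarrow> (\<lambda>w. \<Sum>a<m. conv c (star c (f a)) (f a) w) \<in> Pcone n c"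
proof (induction m)
  case 0
  thus ?case using Pcone.Pzero by (simp add: zero_el_def)
next
  case (Suc m)
  hence "add_el (\<lambda>w. \<Sum>a<m. conv c (star c (f a)) (f a) w) (conv c (star c (f m)) (f m)) \<in> Pcone n c"
    by (simp add: Pcone.Padd)
  thus ?case by (simp add: add_el_def)
qed

section \<open>A sum of squares equal to -1 modulo the ideal\<close>

lemma conv_one_minus_sum_idempotents:
  fixes e :: "nat \<Rightarrow> elem"
  assumes fin: "\<And>i. i < n \<Longrightarrow> finite (supp (e i))"
    and idem: "\<And>i. i < n \<Longrightarrow> conv c (e i) (e i) = e i"
    and unit: "\<And>i w. i < n \<Longrightarrow> conv c (e i) one_el w = e i w"
  shows "conv c (\<lambda>w. one_el w - (\<Sum>i<n. e i w)) (\<lambda>w. one_el w - (\<Sum>i<n. e i w)) w =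
    one_el w - (\<Sum>i<n. e i w) + (\<Sum>i<n. \<Sum>j\<in>{..<n}-{i}. conv c (e i) (e j) w)"
proof -
  define s :: "nat \<Rightarrow> complex" where "s i = (if i = 0 then 1 else -1)" for i
  define h where "h i = (if i = 0 then one_el else e (i - 1))" for i
  define T where "T i j = s i * s j * conv c (h i) (h j) w" for i j
  have fin_h: "finite (supp (h i))" if "i < Suc n" for i
    using that finite_supp_one fin by (simp add: h_def)
  have split: "(\<lambda>w. one_el w - (\<Sum>i<n. e i w)) = (\<lambda>w. \<Sum>i<Suc n. s i * h i w)"
    unfolding sum.lessThan_Suc_shift by (simp add: s_def h_def sum_negf fun_eq_iff)
  have "conv c (\<lambda>w. one_el w - (\<Sum>i<n. e i w)) (\<lambda>w. one_el w - (\<Sum>i<n. e i w)) w =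
      (\<Sum>i<Suc n. \<Sum>j<Suc n. conv c (\<lambda>w. s i * h i w) (\<lambda>w. s j * h j w) w)"
    unfolding split by (rule conv_sum_sum) (auto intro: finite_subset[OF supp_scale] fin_h)
  also have "\<dots> = (\<Sum>i<Suc n. \<Sum>j<Suc n. T i j)"
    unfolding T_def by (intro sum.cong refl conv_scale fin_h) auto
  also have "\<dots> = (\<Sum>j<Suc n. T 0 j) + (\<Sum>i<n. \<Sum>j<Suc n. T (Suc i) j)"
    by (rule sum.lessThan_Suc_shift)
  also have "(\<Sum>j<Suc n. T 0 j) = one_el w - (\<Sum>i<n. e i w)"
    unfolding sum.lessThan_Suc_shift
    by (simp add: T_def s_def h_def conv_one_left finite_supp_one fin sum_negf)
  also have "(\<Sum>i<n. \<Sum>j<Suc n. T (Suc i) j) = (\<Sum>i<n. \<Sum>j\<in>{..<n}-{i}. conv c (e i) (e j) w)"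
  proof (rule sum.cong[OF refl])
    fix i assume i: "i \<in> {..<n}"
    have "(\<Sum>j<Suc n. T (Suc i) j) = - e i w + (\<Sum>j<n. conv c (e i) (e j) w)"
      unfolding sum.lessThan_Suc_shift using i by (simp add: T_def s_def h_def unit)
    also have "(\<Sum>j<n. conv c (e i) (e j) w) = e i w + (\<Sum>j\<in>{..<n}-{i}. conv c (e i) (e j) w)"
      using i by (simp add: sum.remove idem)
    finally show "(\<Sum>j<Suc n. T (Suc i) j) = (\<Sum>j\<in>{..<n}-{i}. conv c (e i) (e j) w)" by simp
  qed
  finally show ?thesis .
qed

definition cross_terms :: "nat \<Rightarrow> nat \<Rightarrow> nat \<Rightarrow> elem" where
  "cross_terms n c a = (\<lambda>w. \<Sum>v<n. \<Sum>u\<in>{..<n}-{v}. conv c (eproj c v a) (eproj c u a) w)"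

lemma cross_terms_in_Ideal:
  assumes "a < c"
  shows "cross_terms n c a \<in> Ideal n c"
proof -
  have "conv c (eproj c v a) (eproj c u a) \<in> Ideal n c" if "v < n" "u \<in> {..<n} - {v}" for v u
    using that assms gens_subset_Ideal unfolding gens_def by blast
  thus ?thesis unfolding cross_terms_def by (intro Ideal_sum) auto
qed

definition witness :: "nat \<Rightarrow> nat \<Rightarrow> complex \<Rightarrow> nat \<Rightarrow> elem" where
  "witness n c r a = (\<lambda>w. r * (one_el w - (\<Sum>v<n. eproj c v a w)))"

lemma supp_one_minus_sum_eproj:
  "supp (\<lambda>w. one_el w - (\<Sum>v<n. eproj c v a w)) \<subseteq> insert [] (\<Union>v<n. gpow c v ` {..<c})"
proof -
  have "supp (\<lambda>w. one_el w - (\<Sum>v<n. eproj c v a w)) \<subseteq>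
      supp one_el \<union> supp (\<lambda>w. \<Sum>v<n. eproj c v a w)"
    by (rule supp_diff)
  also have "\<dots> \<subseteq> supp one_el \<union> (\<Union>v<n. supp (eproj c v a))"
    by (intro Un_mono order_refl supp_sum)
  also have "\<dots> \<subseteq> insert [] (\<Union>v<n. gpow c v ` {..<c})"
    using supp_delta[of "[]"] supp_eproj[of c _ a] unfolding one_el_eq_delta by blast
  finally show ?thesis .
qed

lemma finite_supp_one_minus_sum_eproj:
  "finite (supp (\<lambda>w. one_el w - (\<Sum>v<n. eproj c v a w)))"
  by (rule finite_subset[OF supp_one_minus_sum_eproj]) simp

lemma witness_in_GA:
  assumes "1 \<le> c"
  shows "witness n c r a \<in> GA n c"
proof (rule in_GA_if_supp_subset)
  show "supp (witness n c r a) \<subseteq> insert [] (\<Union>v<n. gpow c v ` {..<c})"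
    unfolding witness_def using supp_scale supp_one_minus_sum_eproj by (rule subset_trans)
  show "reduced n c w" if "w \<in> insert [] (\<Union>v<n. gpow c v ` {..<c})" for w
    using that assms reduced_gpow[of c _ n] by (auto simp: reduced_def[of n c "[]"])
qed simp

lemma star_witness:
  assumes c: "1 \<le> c" and r: "cnj r = r"
  shows "star c (witness n c r a) = witness n c r a"
proof
  fix w
  have "cnj (eproj c v a (invw c w)) = eproj c v a w" for v
    using fun_cong[OF star_eproj[OF c, of v a]] by (simp add: star_def)
  thus "star c (witness n c r a) w = witness n c r a w"
    by (simp add: star_def witness_def r one_el_def invw_def)
qed

lemma sum_conv_star_witness:
  assumes c: "1 \<le> c" and r: "cnj r = r"
  shows "(\<Sum>a<c. conv c (star c (witness n c r a)) (witness n c r a) w) =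
    r * r * ((of_nat c - of_nat n) * one_el w + (\<Sum>a<c. cross_terms n c a w))"
proof -
  have square: "conv c (star c (witness n c r a)) (witness n c r a) w =
      r * r * (one_el w - (\<Sum>v<n. eproj c v a w) + cross_terms n c a w)" for a
  proof -
    have "conv c (star c (witness n c r a)) (witness n c r a) w =
        r * r * conv c (\<lambda>w. one_el w - (\<Sum>v<n. eproj c v a w)) (\<lambda>w. one_el w - (\<Sum>v<n. eproj c v a w)) w"
      unfolding star_witness[OF c r] unfolding witness_def
      by (rule conv_scale[OF finite_supp_one_minus_sum_eproj finite_supp_one_minus_sum_eproj])
    also have "\<dots> = r * r * (one_el w - (\<Sum>v<n. eproj c v a w) + cross_terms n c a w)"
      unfolding cross_terms_def
      by (subst conv_one_minus_sum_idempotents)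
         (simp_all add: finite_supp_eproj eproj_idempotent[OF c] conv_eproj_one)
    finally show ?thesis .
  qed
  have "(\<Sum>a<c. \<Sum>v<n. eproj c v a w) = of_nat n * one_el w"
    by (subst sum.swap) (simp add: sum_eproj[OF c])
  thus ?thesis
    by (simp add: square sum_distrib_left[symmetric] sum.distrib sum_subtractf algebra_simps)
qed

theorem mainTheorem13:
  fixes n c :: nat
  assumes "1 \<le> c"
    and "A_nonzero n c"
    and "qclass n c (neg_el one_el) \<notin> Aplus n c"
  shows "n \<le> c"
proof (rule ccontr)
  assume "\<not> n \<le> c"
  define r where "r = complex_of_real (1 / sqrt (real n - real c))"
  have "cnj r = r" by (simp add: r_def)
  have r_sq: "r * r * (of_nat c - of_nat n) = -1"
    using \<open>\<not> n \<le> c\<close> by (simp add: r_def field_simps flip: of_real_mult)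
  define p where "p = (\<lambda>w. \<Sum>a<c. conv c (star c (witness n c r a)) (witness n c r a) w)"
  have "p \<in> Pcone n c"
    unfolding p_def by (rule Pcone_sum) (rule witness_in_GA[OF assms(1)])
  have "add_el p (neg_el (neg_el one_el)) = smul_el (r * r) (\<lambda>w. \<Sum>a<c. cross_terms n c a w)"
    unfolding p_def sum_conv_star_witness[OF assms(1) \<open>cnj r = r\<close>]
    by (simp add: fun_eq_iff add_el_def neg_el_def smul_el_def distrib_left
        mult.assoc[symmetric] r_sq)
  also have "\<dots> \<in> Ideal n c"
    by (intro Ideal_smul Ideal_sum cross_terms_in_Ideal) auto
  finally have "qclass n c (neg_el one_el) = qclass n c p"
    by (rule qclass_eq_if_diff_in_Ideal)
  with \<open>p \<in> Pcone n c\<close> assms(3) show False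
    unfolding Aplus_def by blast
qed

end
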